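(* Consider a physically realizable annihilation operator plant \[ da = F a\,dt + G_w\, d\mathcal{W} + G_u\, d\mathcal{U},\qquad d\mathcal{Y} = H a\,dt + K\, d\mathcal{W}, \] with purely canonical quantum noise inputs ($d\mathcal{W}\,d\mathcal{W}^\dagger = I\,dt$). Then the corresponding Kalman filter dynamics are independent of the output $\mathcal{Y}$ (the Kalman gain is zero).
   Context: $a$ is a vector of annihilation operators with commutation relations $[a,a^\dagger]=\Theta$, $\Theta>0$; $\mathcal{W}$, $\mathcal{U}$, $\mathcal{Y}$ are vectors of bosonic field operators. A system $da = F a\,dt + G\,d\mathcal{A}$, $d\mathcal{A}^{out} = H a\,dt + K\,d\mathcal{A}$ is physically realizable iff there is a complex matrix $\Theta>0$ with $F\Theta+\Theta F^\dagger + GG^\dagger = 0$, $G=-\Theta H^\dagger$, $K=I$. The plant is physically realizable if it can be augmented by an additional (unused) output $d\mathcal{\tilde Y} = \tilde H a\,dt + \tilde K d\mathcal{W} + \bar K d\mathcal{U}$ so that the system with input $(\mathcal{W},\mathcal{U})$ and output $(\mathcal{Y},\mathcal{\tilde Y})$ is physically realizable. Here the ``Kalman filter'' means the set of stochastic differential equations obtained by applying the standard (classical) Kalman filter formulas to the matrices of the plant model, treating the noises as unit-intensity white noises (it is not the quantum filter). *)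

theory Defs
  imports "Jordan_Normal_Form.Jordan_Normal_Form"
begin

definition ctrans :: "complex mat \<Rightarrow> complex mat" where
  "ctrans A = mat (dim_col A) (dim_row A) (\<lambda>(i,j). cnj (A $$ (j,i)))"

definition hcat :: "complex mat \<Rightarrow> complex mat \<Rightarrow> complex mat" where
  "hcat A B = four_block_mat A B (0\<^sub>m 0 (dim_col A)) (0\<^sub>m 0 (dim_col B))"

definition pos_def_herm :: "nat \<Rightarrow> complex mat \<Rightarrow> bool" where
  "pos_def_herm n T \<longleftrightarrow> T \<in> carrier_mat n n \<and> ctrans T = T \<and>
     (\<forall>v \<in> carrier_vec n. v \<noteq> 0\<^sub>v n \<longrightarrow> 0 < Re (conjugate v \<bullet> (T *\<^sub>v v)))"

(* physical realizability of  da = F a dt + G dA,  dA_out = H a dt + K dA *)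
definition phys_realizable :: "complex mat \<Rightarrow> complex mat \<Rightarrow> complex mat \<Rightarrow> complex mat \<Rightarrow> bool" where
  "phys_realizable F G H K \<longleftrightarrow>
     (\<exists>T. pos_def_herm (dim_row F) T \<and>
          F * T + T * ctrans F + G * ctrans G = 0\<^sub>m (dim_row F) (dim_row F) \<and>
          G = - (T * ctrans H) \<and>
          K = 1\<^sub>m (dim_row K))"

(* plant  da = F a dt + Gw dW + Gu dU,  dY = H a dt + K dW  (a : n, W : nw, U : nu, Y : ny)
   is physically realizable if it can be augmented by an output
   dY~ = Ht a dt + Kt dW + Kb dU  such that the system with input (W,U) and output (Y,Y~)
   is physically realizable. *)
definition plant_phys_realizable ::
  "nat \<Rightarrow> nat \<Rightarrow> nat \<Rightarrow> nat \<Rightarrow> complex mat \<Rightarrow> complex mat \<Rightarrow> complex mat \<Rightarrow> complex mat \<Rightarrow> complex mat \<Rightarrow> bool" where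
  "plant_phys_realizable n nw nu ny F Gw Gu H K \<longleftrightarrow>
     (\<exists>m Ht Kt Kb. Ht \<in> carrier_mat m n \<and> Kt \<in> carrier_mat m nw \<and> Kb \<in> carrier_mat m nu \<and>
        phys_realizable F (hcat Gw Gu) (H @\<^sub>r Ht) (four_block_mat K (0\<^sub>m ny nu) Kt Kb))"

(* Classical Kalman filter formulas applied to the plant matrices, with W, U treated as
   unit-intensity white noises: process noise Gw dW + Gu dU, measurement noise K dW. *)
definition kf_R :: "complex mat \<Rightarrow> complex mat" where
  "kf_R K = K * ctrans K"

definition kalman_gain :: "complex mat \<Rightarrow> complex mat \<Rightarrow> complex mat \<Rightarrow> complex mat \<Rightarrow> complex mat" where
  "kalman_gain Gw H K P = (P * ctrans H + Gw * ctrans K) * the (mat_inverse (kf_R K))"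

definition kf_riccati :: "complex mat \<Rightarrow> complex mat \<Rightarrow> complex mat \<Rightarrow> complex mat \<Rightarrow> complex mat \<Rightarrow> complex mat \<Rightarrow> bool" where
  "kf_riccati F Gw Gu H K P \<longleftrightarrow>
     (let L = kalman_gain Gw H K P in
      F * P + P * ctrans F + Gw * ctrans Gw + Gu * ctrans Gu - L * kf_R K * ctrans L
        = 0\<^sub>m (dim_row F) (dim_row F))"

definition hurwitz :: "complex mat \<Rightarrow> bool" where
  "hurwitz A \<longleftrightarrow> (\<forall>e. eigenvalue A e \<longrightarrow> Re e < 0)"

end

theory Submission
  imports Defs "Jordan_Normal_Form.Schur_Decomposition"
begin

text \<open>
  The Lyapunov matrix \<open>\<Theta>\<close> of the realizable augmented plant already solves the filter Riccati
  equation: realizability forces \<open>K = [I 0]\<close>, hence \<open>K K\<^sup>* = I\<close> and \<open>G\<^sub>w K\<^sup>* = - \<Theta> H\<^sup>*\<close>, so the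
  gain at \<open>P\<close> is \<open>(P - \<Theta>) H\<^sup>*\<close>, which vanishes at \<open>P = \<Theta>\<close>. For any Hermitian solution \<open>P\<close>,
  subtracting the two equations shows that \<open>X = P - \<Theta>\<close> solves the Sylvester equation
  \<open>(F - L H) X = X (- F\<^sup>*)\<close>. If \<open>F - L H\<close> is Hurwitz, its spectrum is disjoint from that of
  \<open>- F\<^sup>*\<close>, which lies in the closed right half-plane because \<open>F \<Theta> + \<Theta> F\<^sup>* = - G G\<^sup>* \<le> 0\<close> with
  \<open>\<Theta> > 0\<close>; so \<open>X = 0\<close> and the gain is zero.
\<close>

lemma ctrans_dim[simp]: "dim_row (ctrans A) = dim_col A" "dim_col (ctrans A) = dim_row A"
  unfolding ctrans_def by auto

lemma ctrans_carrier_mat[simp, intro]: "A \<in> carrier_mat m n \<Longrightarrow> ctrans A \<in> carrier_mat n m"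
  unfolding carrier_mat_def by auto

lemma index_ctrans[simp]: "i < dim_col A \<Longrightarrow> j < dim_row A \<Longrightarrow> ctrans A $$ (i,j) = cnj (A $$ (j,i))"
  unfolding ctrans_def by auto

lemma ctrans_ctrans[simp]: "ctrans (ctrans A) = A"
  by (intro eq_matI) auto

lemma ctrans_mult:
  "A \<in> carrier_mat m k \<Longrightarrow> B \<in> carrier_mat k n \<Longrightarrow> ctrans (A * B) = ctrans B * ctrans A"
  by (intro eq_matI) (auto simp: scalar_prod_def mult.commute)

lemma ctrans_minus:
  "A \<in> carrier_mat m n \<Longrightarrow> B \<in> carrier_mat m n \<Longrightarrow> ctrans (A - B) = ctrans A - ctrans B"
  by (intro eq_matI) auto

lemma conjugate_scalar_prod_ctrans:
  assumes A: "A \<in> carrier_mat n m" and v: "v \<in> carrier_vec n" and u: "u \<in> carrier_vec m"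
  shows "conjugate v \<bullet> (A *\<^sub>v u) = conjugate (ctrans A *\<^sub>v v) \<bullet> u"
proof -
  have "conjugate v \<bullet> (A *\<^sub>v u) = (\<Sum>i\<in>{0..<n}. \<Sum>j\<in>{0..<m}. cnj (v $ i) * A $$ (i,j) * u $ j)"
    using A v u by (simp add: scalar_prod_def sum_distrib_left mult.assoc)
  also have "\<dots> = (\<Sum>j\<in>{0..<m}. \<Sum>i\<in>{0..<n}. cnj (v $ i) * A $$ (i,j) * u $ j)"
    by (rule sum.swap)
  also have "\<dots> = conjugate (ctrans A *\<^sub>v v) \<bullet> u"
    using A v u by (auto simp: scalar_prod_def sum_distrib_right sum_distrib_left
        mult.commute mult.left_commute intro!: sum.cong)
  finally show ?thesis .
qed

lemma eigenvalue_upper_triangular_diag: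
  fixes U :: "'a :: field mat"
  assumes U: "U \<in> carrier_mat n n" and ut: "upper_triangular U" and j: "j < n"
  shows "eigenvalue U (U $$ (j,j))"
proof -
  have "U $$ (j,j) \<in> set (diag_mat U)" using U j unfolding diag_mat_def by auto
  then show ?thesis
    unfolding eigenvalue_root_char_poly[OF U] char_poly_upper_triangular[OF U ut]
    by (auto simp: poly_prod_list prod_list_zero_iff)
qed

lemma upper_triangular_sylvester_zero:
  fixes A U Y :: "'a :: field mat"
  assumes A: "A \<in> carrier_mat n n" and U: "U \<in> carrier_mat m m" and ut: "upper_triangular U"
    and Y: "Y \<in> carrier_mat n m" and AY: "A * Y = Y * U"
    and diag: "\<And>j. j < m \<Longrightarrow> \<not> eigenvalue A (U $$ (j,j))"
  shows "Y = 0\<^sub>m n m"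
proof -
  have "col Y j = 0\<^sub>v n" if "j < m" for j
    using that
  proof (induction j rule: less_induct)
    case (less j)
    have "A *\<^sub>v col Y j = U $$ (j,j) \<cdot>\<^sub>v col Y j"
    proof (rule eq_vecI)
      fix i assume "i < dim_vec (U $$ (j,j) \<cdot>\<^sub>v col Y j)"
      hence i: "i < n" using Y by auto
      \<comment> \<open>upper triangularity and the induction hypothesis kill all summands but \<open>k = j\<close>\<close>
      have other: "Y $$ (i,k) * U $$ (k,j) = 0" if "k < m" "k \<noteq> j" for k
      proof (cases "k < j")
        case True
        then have "col Y k $ i = 0" using less.IH[of k] i that by simp
        then show ?thesis using True i Y that by simp
      next
        case False
        then show ?thesis using ut U that less.prems by (simp add: upper_triangular_def)
      qed
      have "(A *\<^sub>v col Y j) $ i = (Y * U) $$ (i,j)"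
        using A Y i less.prems by (simp flip: AY)
      also have "\<dots> = (\<Sum>k\<in>{0..<m}. Y $$ (i,k) * U $$ (k,j))"
        using Y U i less.prems by (simp add: scalar_prod_def)
      also have "\<dots> = Y $$ (i,j) * U $$ (j,j)"
        using less.prems by (subst sum.remove[of _ j]) (auto intro!: sum.neutral simp: other)
      finally show "(A *\<^sub>v col Y j) $ i = (U $$ (j,j) \<cdot>\<^sub>v col Y j) $ i"
        using Y i less.prems by (simp add: mult.commute)
    qed (use A Y in auto)
    moreover have "col Y j \<in> carrier_vec n" using Y less.prems by simp
    ultimately show ?case
      using diag[OF less.prems] A unfolding eigenvalue_def eigenvector_def by blast
  qed
  then show ?thesis
    using Y by (intro eq_matI) (auto simp flip: index_col)
qed

lemma sylvester_disjoint_spectra_zero: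
  fixes A B X :: "complex mat"
  assumes A: "A \<in> carrier_mat n n" and B: "B \<in> carrier_mat m m" and X: "X \<in> carrier_mat n m"
    and disjoint: "\<And>e. eigenvalue A e \<Longrightarrow> eigenvalue B e \<Longrightarrow> False"
    and AX: "A * X = X * B"
  shows "X = 0\<^sub>m n m"
proof -
  obtain es where "char_poly B = (\<Prod>a\<leftarrow>es. [:-a,1:])" using char_poly_factorized[OF B] by auto
  from schur_upper_triangular[OF B this] obtain U
    where U: "U \<in> carrier_mat m m" and ut: "upper_triangular U" and sim: "similar_mat B U"
    by blast
  then obtain P Q where "similar_mat_wit B U P Q" unfolding similar_mat_def by blast
  from similar_mat_witD2[OF B this] have P: "P \<in> carrier_mat m m" and Q: "Q \<in> carrier_mat m m"
    and PQ: "P * Q = 1\<^sub>m m" and QP: "Q * P = 1\<^sub>m m" and BPUQ: "B = P * U * Q" by auto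
  have XP: "X * P \<in> carrier_mat n m" using X P by simp
  have "A * (X * P) = X * (P * U * Q) * P"
    using A X P by (simp flip: AX BPUQ add: assoc_mult_mat[of _ n n _ m _ m])
  also have "X * (P * U * Q) = X * P * U * Q"
    using X P U Q by (simp add: assoc_mult_mat[of _ n m _ m _ m] assoc_mult_mat[of _ m m _ m _ m])
  also have "\<dots> * P = (X * P) * U * (Q * P)"
    using XP U Q P by (simp add: assoc_mult_mat[of _ n m _ m _ m])
  finally have "A * (X * P) = (X * P) * U" using X P U QP by simp
  moreover have "\<not> eigenvalue A (U $$ (j,j))" if "j < m" for j
    using disjoint eigenvalue_upper_triangular_diag[OF U ut that]
    unfolding eigenvalue_root_char_poly[OF B] eigenvalue_root_char_poly[OF U] char_poly_similar[OF sim]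
    by blast
  ultimately have "X * P = 0\<^sub>m n m"
    using upper_triangular_sylvester_zero[OF A U ut] X P by auto
  then have "X * (P * Q) = 0\<^sub>m n m" using X P Q by (simp flip: assoc_mult_mat[of _ n m _ m _ m])
  then show ?thesis using PQ X by simp
qed

lemma lyapunov_eigenvalue_re_nonneg:
  fixes F T G :: "complex mat"
  assumes F: "F \<in> carrier_mat n n" and G: "G \<in> carrier_mat n k" and T: "pos_def_herm n T"
    and lyap: "F * T + T * ctrans F + G * ctrans G = 0\<^sub>m n n"
    and ev: "eigenvalue (- ctrans F) e"
  shows "0 \<le> Re e"
proof -
  have Tc: "T \<in> carrier_mat n n" using T unfolding pos_def_herm_def by auto
  obtain v where v: "v \<in> carrier_vec n" "v \<noteq> 0\<^sub>v n" and ev_v: "(- ctrans F) *\<^sub>v v = e \<cdot>\<^sub>v v"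
    using ev F unfolding eigenvalue_def eigenvector_def by auto
  have "ctrans F *\<^sub>v v = - ((- ctrans F) *\<^sub>v v)" using F v by auto
  then have Fv: "ctrans F *\<^sub>v v = (- e) \<cdot>\<^sub>v v" using ev_v by auto
  define s where "s = conjugate v \<bullet> (T *\<^sub>v v)"
  have s: "0 < Re s" using T v unfolding pos_def_herm_def s_def by auto
  define w where "w = ctrans G *\<^sub>v v"
  have w: "w \<in> carrier_vec k" unfolding w_def using G v by (intro mult_mat_vec_carrier) auto
  \<comment> \<open>evaluate the Lyapunov equation in the quadratic form of the eigenvector \<open>v\<close>\<close>
  have FTv: "F *\<^sub>v (T *\<^sub>v v) \<in> carrier_vec n" and TFv: "T *\<^sub>v (ctrans F *\<^sub>v v) \<in> carrier_vec n"
    and Gw: "G *\<^sub>v w \<in> carrier_vec n"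
    using F G Tc v w by (auto intro!: mult_mat_vec_carrier)
  have "(F * T + T * ctrans F + G * ctrans G) *\<^sub>v v
      = F *\<^sub>v (T *\<^sub>v v) + T *\<^sub>v (ctrans F *\<^sub>v v) + G *\<^sub>v w"
    using F G Tc v unfolding w_def
    by (simp add: add_mult_distrib_mat_vec[of _ n n] assoc_mult_mat_vec[of _ n n _ n]
        assoc_mult_mat_vec[of _ n k _ n])
  then have "conjugate v \<bullet> ((F * T + T * ctrans F + G * ctrans G) *\<^sub>v v)
      = conjugate v \<bullet> (F *\<^sub>v (T *\<^sub>v v)) + conjugate v \<bullet> (T *\<^sub>v (ctrans F *\<^sub>v v))
        + conjugate v \<bullet> (G *\<^sub>v w)"
    using FTv TFv Gw v by (simp add: scalar_prod_add_distrib[of _ n])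
  also have "\<dots> = - cnj e * s - e * s + conjugate w \<bullet> w"
  proof -
    have "conjugate v \<bullet> (F *\<^sub>v (T *\<^sub>v v)) = conjugate ((- e) \<cdot>\<^sub>v v) \<bullet> (T *\<^sub>v v)"
      using F Tc v by (simp flip: Fv add: conjugate_scalar_prod_ctrans[of _ n n])
    moreover have "conjugate v \<bullet> (T *\<^sub>v (ctrans F *\<^sub>v v)) = - e * s"
      using Tc v unfolding Fv s_def by (simp add: mult_mat_vec)
    moreover have "conjugate v \<bullet> (G *\<^sub>v w) = conjugate w \<bullet> w"
      using G v w unfolding w_def by (simp add: conjugate_scalar_prod_ctrans[of _ n k])
    ultimately show ?thesis
      using Tc v unfolding s_def by (simp add: conjugate_smult_vec)
  qed
  finally have "- cnj e * s - e * s + conjugate w \<bullet> w = conjugate v \<bullet> (0\<^sub>m n n *\<^sub>v v)"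
    using lyap by simp
  also have "0\<^sub>m n n *\<^sub>v v = 0\<^sub>v n"
    using v by (intro eq_vecI) (auto simp: scalar_prod_def)
  finally have "- cnj e * s - e * s + conjugate w \<bullet> w = 0"
    using v by simp
  moreover have "0 \<le> Re (conjugate w \<bullet> w)"
    using conjugate_square_ge_0_vec[of w] comm_scalar_prod[of w k "conjugate w"] w
    by (simp add: less_eq_complex_def)
  ultimately have "0 \<le> 2 * Re e * Re s"
    by (auto simp: algebra_simps dest!: arg_cong[of _ _ Re])
  with s show ?thesis by (simp add: zero_le_mult_iff)
qed

lemma hcat_dim[simp]: "dim_row (hcat A B) = dim_row A" "dim_col (hcat A B) = dim_col A + dim_col B"
  unfolding hcat_def by auto

lemma hcat_carrier_mat[simp, intro]:
  "A \<in> carrier_mat n a \<Longrightarrow> B \<in> carrier_mat n b \<Longrightarrow> hcat A B \<in> carrier_mat n (a + b)"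
  unfolding hcat_def by auto

lemma index_hcat:
  assumes "A \<in> carrier_mat n a" "B \<in> carrier_mat n b" "i < n"
  shows "k < a \<Longrightarrow> hcat A B $$ (i,k) = A $$ (i,k)"
    and "k < b \<Longrightarrow> hcat A B $$ (i,a + k) = B $$ (i,k)"
  using assms unfolding hcat_def by auto

lemma hcat_mult_ctrans:
  assumes A: "A \<in> carrier_mat n a" and B: "B \<in> carrier_mat n b"
  shows "hcat A B * ctrans (hcat A B) = A * ctrans A + B * ctrans B"
proof (rule eq_matI)
  fix i j assume "i < dim_row (A * ctrans A + B * ctrans B)" "j < dim_col (A * ctrans A + B * ctrans B)"
  then have ij: "i < n" "j < n" using B by auto
  let ?G = "hcat A B"
  have "(?G * ctrans ?G) $$ (i,j) = (\<Sum>k\<in>{0..<a+b}. ?G $$ (i,k) * cnj (?G $$ (j,k)))"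
    using A B ij by (simp add: scalar_prod_def)
  also have "\<dots> = (\<Sum>k\<in>{0..<a}. ?G $$ (i,k) * cnj (?G $$ (j,k)))
      + (\<Sum>k\<in>{0..<b}. ?G $$ (i,a+k) * cnj (?G $$ (j,a+k)))"
    by (simp add: sum.atLeastLessThan_concat[of 0 a "a+b", symmetric])
      (rule sum.reindex_bij_witness[of _ "\<lambda>k. a + k" "\<lambda>k. k - a"]; auto)
  also have "\<dots> = (A * ctrans A + B * ctrans B) $$ (i,j)"
    using A B ij by (simp add: index_hcat scalar_prod_def)
  finally show "(?G * ctrans ?G) $$ (i,j) = (A * ctrans A + B * ctrans B) $$ (i,j)" .
qed (use A B in auto)

lemma four_block_mat_eq_one:
  fixes K :: "'a :: zero_neq_one mat"
  assumes K: "K \<in> carrier_mat ny nw" and C: "C \<in> carrier_mat m nw" and D: "D \<in> carrier_mat m nu"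
    and one: "four_block_mat K (0\<^sub>m ny nu) C D = 1\<^sub>m (ny + m)"
  shows "ny \<le> nw" and "\<And>i k. i < ny \<Longrightarrow> k < nw \<Longrightarrow> K $$ (i,k) = (if i = k then 1 else 0)"
proof -
  have dims: "nw + nu = ny + m" using arg_cong[OF one, of dim_col] K C D by simp
  show "ny \<le> nw"
  proof (rule ccontr)
    assume "\<not> ny \<le> nw"
    \<comment> \<open>then the diagonal entry \<open>(nw, nw)\<close> of the identity would lie in the zero block\<close>
    then have "four_block_mat K (0\<^sub>m ny nu) C D $$ (nw,nw) = 0" using K C D dims by simp
    then show False using one \<open>\<not> ny \<le> nw\<close> dims by simp
  qed
  show "K $$ (i,k) = (if i = k then 1 else 0)" if "i < ny" "k < nw" for i k
    using arg_cong[OF one, of "\<lambda>M. M $$ (i,k)"] that K C D dims by simp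
qed

lemma mult_ctrans_coordinate_projection:
  assumes K: "K \<in> carrier_mat ny nw" and le: "ny \<le> nw"
    and Kij: "\<And>i k. i < ny \<Longrightarrow> k < nw \<Longrightarrow> K $$ (i,k) = (if i = k then 1 else 0)"
    and M: "M \<in> carrier_mat r nw"
  shows "M * ctrans K = mat r ny (\<lambda>(i,j). M $$ (i,j))"
proof (rule eq_matI)
  fix i j assume "i < dim_row (mat r ny (\<lambda>(i,j). M $$ (i,j)))" "j < dim_col (mat r ny (\<lambda>(i,j). M $$ (i,j)))"
  then have ij: "i < r" "j < ny" by auto
  have "(M * ctrans K) $$ (i,j) = (\<Sum>k\<in>{0..<nw}. M $$ (i,k) * (if j = k then 1 else 0))"
    using K M ij by (auto simp: scalar_prod_def Kij intro!: sum.cong)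
  also have "\<dots> = M $$ (i,j)" using ij le by (simp add: if_distrib cong: if_cong)
  finally show "(M * ctrans K) $$ (i,j) = mat r ny (\<lambda>(i,j). M $$ (i,j)) $$ (i,j)" using ij by simp
qed (use K M in auto)

lemma mat_inverse_one: "the (mat_inverse (1\<^sub>m n :: 'a :: field mat)) = 1\<^sub>m n"
proof -
  have "1\<^sub>m n \<in> Units (ring_mat TYPE('a) n (undefined :: unit))"
    using monoid.Units_one_closed[OF ring.is_monoid[OF ring_mat[of n "undefined :: unit"]]]
    by (simp add: ring_mat_simps)
  then obtain B where B: "mat_inverse (1\<^sub>m n :: 'a mat) = Some B"
    using mat_inverse(1)[OF one_carrier_mat, of n "undefined :: unit"] by auto
  from mat_inverse(2)[OF one_carrier_mat B] have "B = 1\<^sub>m n" by auto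
  then show ?thesis using B by simp
qed

lemma plant_phys_realizableE:
  fixes F Gw Gu H K :: "complex mat"
  assumes F: "F \<in> carrier_mat n n" and Gw: "Gw \<in> carrier_mat n nw" and Gu: "Gu \<in> carrier_mat n nu"
    and H: "H \<in> carrier_mat ny n" and K: "K \<in> carrier_mat ny nw"
    and realizable: "plant_phys_realizable n nw nu ny F Gw Gu H K"
  obtains T where "pos_def_herm n T"
    and "F * T + T * ctrans F + hcat Gw Gu * ctrans (hcat Gw Gu) = 0\<^sub>m n n"
    and "Gw * ctrans K = - (T * ctrans H)" and "kf_R K = 1\<^sub>m ny"
proof -
  obtain m Ht Kt Kb where Ht: "Ht \<in> carrier_mat m n" and Kt: "Kt \<in> carrier_mat m nw"
    and Kb: "Kb \<in> carrier_mat m nu"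
    and "phys_realizable F (hcat Gw Gu) (H @\<^sub>r Ht) (four_block_mat K (0\<^sub>m ny nu) Kt Kb)"
    using realizable unfolding plant_phys_realizable_def by auto
  then obtain T where T: "pos_def_herm n T"
    and lyap: "F * T + T * ctrans F + hcat Gw Gu * ctrans (hcat Gw Gu) = 0\<^sub>m n n"
    and G: "hcat Gw Gu = - (T * ctrans (H @\<^sub>r Ht))"
    and one: "four_block_mat K (0\<^sub>m ny nu) Kt Kb = 1\<^sub>m (ny + m)"
    using F K unfolding phys_realizable_def by auto
  have Tc: "T \<in> carrier_mat n n" using T unfolding pos_def_herm_def by auto
  note le = four_block_mat_eq_one(1)[OF K Kt Kb one]
    and Kij = four_block_mat_eq_one(2)[OF K Kt Kb one]
  have "kf_R K = mat ny ny (\<lambda>(i,j). K $$ (i,j))"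
    unfolding kf_R_def by (rule mult_ctrans_coordinate_projection[OF K le Kij K])
  also have "\<dots> = 1\<^sub>m ny" using le by (intro eq_matI) (auto simp: Kij)
  finally have R: "kf_R K = 1\<^sub>m ny" .
  have "Gw * ctrans K = mat n ny (\<lambda>(i,j). Gw $$ (i,j))"
    by (rule mult_ctrans_coordinate_projection[OF K le Kij Gw])
  also have "\<dots> = - (T * ctrans H)"
  proof (rule eq_matI)
    fix i j assume "i < dim_row (- (T * ctrans H))" "j < dim_col (- (T * ctrans H))"
    then have ij: "i < n" "j < ny" using Tc H by auto
    have "Gw $$ (i,j) = hcat Gw Gu $$ (i,j)" using Gw Gu ij le by (simp add: index_hcat)
    also have "\<dots> = (- (T * ctrans (H @\<^sub>r Ht))) $$ (i,j)"
      by (simp only: G)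
    also have "\<dots> = (- (T * ctrans H)) $$ (i,j)"
      using Tc H Ht carrier_append_rows[OF H Ht] ij le by (auto simp: scalar_prod_def append_rows_def intro!: sum.cong)
    finally show "mat n ny (\<lambda>(i,j). Gw $$ (i,j)) $$ (i,j) = (- (T * ctrans H)) $$ (i,j)"
      using ij by simp
  qed (use Tc H in auto)
  finally show thesis using that T lyap R by blast
qed

lemma kalman_gain_unit_noise:
  assumes P: "P \<in> carrier_mat n n" and T: "T \<in> carrier_mat n n" and H: "H \<in> carrier_mat ny n"
    and R: "kf_R K = 1\<^sub>m ny" and GK: "Gw * ctrans K = - (T * ctrans H)"
  shows "kalman_gain Gw H K P = (P - T) * ctrans H"
proof -
  have "kalman_gain Gw H K P = (P * ctrans H + - (T * ctrans H)) * 1\<^sub>m ny"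
    unfolding kalman_gain_def R mat_inverse_one GK ..
  also have "\<dots> = P * ctrans H - T * ctrans H"
    using P T H by (simp add: minus_add_uminus_mat[of _ n ny])
  also have "\<dots> = (P - T) * ctrans H"
    using minus_mult_distrib_mat[OF P T ctrans_carrier_mat[OF H]] by simp
  finally show ?thesis .
qed

lemma kf_riccati_unit_noise_iff:
  fixes F Gw Gu H K P :: "complex mat"
  assumes F: "F \<in> carrier_mat n n" and P: "P \<in> carrier_mat n n"
    and Gw: "Gw \<in> carrier_mat n nw" and Gu: "Gu \<in> carrier_mat n nu"
    and R: "kf_R K = 1\<^sub>m ny" and L: "kalman_gain Gw H K P \<in> carrier_mat n ny"
  shows "kf_riccati F Gw Gu H K P \<longleftrightarrow>
    F * P + P * ctrans F + (Gw * ctrans Gw + Gu * ctrans Gu)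
      - kalman_gain Gw H K P * ctrans (kalman_gain Gw H K P) = 0\<^sub>m n n"
  using F P Gw Gu L unfolding kf_riccati_def Let_def R
  by (simp add: assoc_add_mat[of _ n n])

lemma riccati_difference_sylvester:
  fixes F P T Q H :: "complex mat"
  assumes F: "F \<in> carrier_mat n n" and P: "P \<in> carrier_mat n n" and T: "T \<in> carrier_mat n n"
    and Q: "Q \<in> carrier_mat n n" and H: "H \<in> carrier_mat ny n"
    and P_herm: "ctrans P = P" and T_herm: "ctrans T = T"
    and lyap: "F * T + T * ctrans F + Q = 0\<^sub>m n n"
    and riccati: "F * P + P * ctrans F + Q - L * ctrans L = 0\<^sub>m n n"
    and L_def: "L = (P - T) * ctrans H"
  shows "(F - L * H) * (P - T) = (P - T) * (- ctrans F)"
proof -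
  define X where "X = P - T"
  have X: "X \<in> carrier_mat n n" and L: "L \<in> carrier_mat n ny"
    using P T H unfolding X_def L_def by auto
  have "ctrans X = X" unfolding X_def using ctrans_minus[OF P T] P_herm T_herm by simp
  then have "ctrans L = H * X"
    unfolding L_def X_def[symmetric] using ctrans_mult[OF X ctrans_carrier_mat[OF H]] by simp
  have "(F - L * H) * X = F * X - L * H * X"
    using minus_mult_distrib_mat[OF F mult_carrier_mat[OF L H] X] .
  also have "L * H * X = L * ctrans L"
    using assoc_mult_mat[OF L H X] \<open>ctrans L = H * X\<close> by simp
  also have "F * X = F * P - F * T"
    unfolding X_def using mult_minus_distrib_mat[OF F P T] .
  finally have "(F - L * H) * X = F * P - F * T - L * ctrans L" .
  moreover have "X * (- ctrans F) = - (P * ctrans F - T * ctrans F)"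
    unfolding X_def using minus_mult_distrib_mat[OF P T ctrans_carrier_mat[OF F]] P T F by simp
  moreover have "F * P - F * T - L * ctrans L = - (P * ctrans F - T * ctrans F)"
  proof (rule eq_matI)
    fix i j assume "i < dim_row (- (P * ctrans F - T * ctrans F))" "j < dim_col (- (P * ctrans F - T * ctrans F))"
    then have ij: "i < n" "j < n" using T F by auto
    have lyap_ij: "(F * T) $$ (i,j) + (T * ctrans F) $$ (i,j) + Q $$ (i,j) = 0"
      using arg_cong[OF lyap, of "\<lambda>M. M $$ (i,j)"] ij F T Q by simp
    have riccati_ij:
      "(F * P) $$ (i,j) + (P * ctrans F) $$ (i,j) + Q $$ (i,j) - (L * ctrans L) $$ (i,j) = 0"
      using arg_cong[OF riccati, of "\<lambda>M. M $$ (i,j)"] ij F P Q L by simp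
    \<comment> \<open>subtracting the Lyapunov equation from the Riccati equation eliminates \<open>Q\<close>\<close>
    have "(F * P) $$ (i,j) - (F * T) $$ (i,j) - (L * ctrans L) $$ (i,j)
        + ((P * ctrans F) $$ (i,j) - (T * ctrans F) $$ (i,j))
      = ((F * P) $$ (i,j) + (P * ctrans F) $$ (i,j) + Q $$ (i,j) - (L * ctrans L) $$ (i,j))
        - ((F * T) $$ (i,j) + (T * ctrans F) $$ (i,j) + Q $$ (i,j))"
      by (simp add: algebra_simps)
    then have "(F * P) $$ (i,j) - (F * T) $$ (i,j) - (L * ctrans L) $$ (i,j)
        = - ((P * ctrans F) $$ (i,j) - (T * ctrans F) $$ (i,j))"
      unfolding lyap_ij riccati_ij by (simp add: add_eq_0_iff)
    then show "(F * P - F * T - L * ctrans L) $$ (i,j) = (- (P * ctrans F - T * ctrans F)) $$ (i,j)"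
      using ij F P T L by simp
  qed (use F P T L in auto)
  ultimately show ?thesis unfolding X_def by simp
qed

lemma hurwitz_riccati_solution_eq:
  fixes F G H T P :: "complex mat"
  assumes F: "F \<in> carrier_mat n n" and G: "G \<in> carrier_mat n k" and H: "H \<in> carrier_mat ny n"
    and T: "pos_def_herm n T" and lyap: "F * T + T * ctrans F + G * ctrans G = 0\<^sub>m n n"
    and P: "P \<in> carrier_mat n n" and P_herm: "ctrans P = P"
    and riccati: "F * P + P * ctrans F + G * ctrans G - L * ctrans L = 0\<^sub>m n n"
    and L_def: "L = (P - T) * ctrans H"
    and stable: "hurwitz (F - L * H)"
  shows "P = T"
proof -
  have Tc: "T \<in> carrier_mat n n" and T_herm: "ctrans T = T"
    using T unfolding pos_def_herm_def by auto
  have "(F - L * H) * (P - T) = (P - T) * (- ctrans F)"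
    using riccati_difference_sylvester[OF F P Tc _ H P_herm T_herm lyap riccati L_def] G by simp
  then have PT: "P - T = 0\<^sub>m n n"
  proof (rule sylvester_disjoint_spectra_zero[rotated -1])
    show "F - L * H \<in> carrier_mat n n" "- ctrans F \<in> carrier_mat n n" "P - T \<in> carrier_mat n n"
      using F H P Tc unfolding L_def by auto
    \<comment> \<open>the closed-loop spectrum lies in the open left half-plane, that of \<open>- F\<^sup>*\<close> in the closed right one\<close>
    show False if "eigenvalue (F - L * H) e" "eigenvalue (- ctrans F) e" for e
      using stable that lyapunov_eigenvalue_re_nonneg[OF F G T lyap]
      unfolding hurwitz_def by force
  qed
  show ?thesis
  proof (rule eq_matI)
    fix i j assume "i < dim_row T" "j < dim_col T"
    then show "P $$ (i,j) = T $$ (i,j)"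
      using arg_cong[OF PT, of "\<lambda>M. M $$ (i,j)"] P Tc by simp
  qed (use P Tc in auto)
qed

theorem corollary1:
  fixes F Gw Gu H K :: "complex mat" and n nw nu ny :: nat
  assumes "F \<in> carrier_mat n n" and "Gw \<in> carrier_mat n nw" and "Gu \<in> carrier_mat n nu"
    and "H \<in> carrier_mat ny n" and "K \<in> carrier_mat ny nw"
    and "plant_phys_realizable n nw nu ny F Gw Gu H K"
  shows "(\<exists>P. pos_def_herm n P \<and> kf_riccati F Gw Gu H K P \<and>
              kalman_gain Gw H K P = 0\<^sub>m n ny)
       \<and> (\<forall>P. P \<in> carrier_mat n n \<and> ctrans P = P \<and> kf_riccati F Gw Gu H K P \<and>
              hurwitz (F - kalman_gain Gw H K P * H)
              \<longrightarrow> kalman_gain Gw H K P = 0\<^sub>m n ny)"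
proof -
  note F = assms(1) and Gw = assms(2) and Gu = assms(3) and H = assms(4)
  obtain T where T: "pos_def_herm n T"
    and lyap: "F * T + T * ctrans F + hcat Gw Gu * ctrans (hcat Gw Gu) = 0\<^sub>m n n"
    and GK: "Gw * ctrans K = - (T * ctrans H)" and R: "kf_R K = 1\<^sub>m ny"
    using plant_phys_realizableE[OF assms] by blast
  have Tc: "T \<in> carrier_mat n n" using T unfolding pos_def_herm_def by auto
  note gain = kalman_gain_unit_noise[OF _ Tc H R GK]
  have riccati_iff: "kf_riccati F Gw Gu H K P \<longleftrightarrow>
      F * P + P * ctrans F + hcat Gw Gu * ctrans (hcat Gw Gu)
        - (P - T) * ctrans H * ctrans ((P - T) * ctrans H) = 0\<^sub>m n n"
    if P: "P \<in> carrier_mat n n" for P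
    using kf_riccati_unit_noise_iff[OF F P Gw Gu R, of H] gain[OF P]
      mult_carrier_mat[OF minus_carrier_mat[OF Tc] ctrans_carrier_mat[OF H], of P]
    by (simp add: hcat_mult_ctrans[OF Gw Gu])
  have "kalman_gain Gw H K T = 0\<^sub>m n ny" and "kf_riccati F Gw Gu H K T"
    using gain[OF Tc] riccati_iff[OF Tc] lyap Tc H by simp_all
  moreover have "kalman_gain Gw H K P = 0\<^sub>m n ny"
    if "P \<in> carrier_mat n n" "ctrans P = P" "kf_riccati F Gw Gu H K P"
      "hurwitz (F - kalman_gain Gw H K P * H)" for P
    using hurwitz_riccati_solution_eq[OF F hcat_carrier_mat[OF Gw Gu] H T lyap, of P]
      that gain riccati_iff Tc H by simp
  ultimately show ?thesis using T by blast
qed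

end
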